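(* Let $S$ be an ordered forest and $I$ a finite linear order. Then $S\otimes I$ with the relation $\sqsubseteq_{S\otimes I}$ is a forest, and, taken additionally with the linear order $\leq_{S\otimes I}$, it is an ordered forest.
   Context: A forest is a finite poset in which the set of predecessors of each element is linearly ordered (each element its own predecessor); $1\oplus T$ denotes the tree obtained by adding a new smallest element. An ordered tree has a linear order on the immediate successors of each node, inducing the lexicographic order ($v\leq w$ if $v\sqsubseteq w$; for incomparable $v,w$ compare the immediate successors of $v\wedge w$ below $v$ and $w$). An ordered forest is a forest $T$ with a linear order $\leq_T$ that is the restriction of the lexicographic order of some ordered-tree structure on $1\oplus T$. For $s$ in a forest $S$, ${\rm ht}(s)$ is the number of predecessors of $s$ (including $s$), ${\rm ht}(S)=\max_s{\rm ht}(s)$, and for $i<{\rm ht}(s)$, $s(i)$ is the predecessor of $s$ of height $i+1$. Let $n={\rm ht}(S)$ and $S\otimes I=\{(s,t)\in S\times I^{\leq n}\mid {\rm ht}(s)=|t|\}$, where $I^{\le n}$ are sequences $t=(t(0),\dots,t(|t|-1))$ in $I$ of length at most $n$. Set $(s_1,t_1)\sqsubseteq_{S\otimes I}(s_2,t_2)$ iff $s_1\sqsubseteq_S s_2$, $t_1\upharpoonright({\rm ht}(s_1)-1)=t_2\upharpoonright({\rm ht}(s_1)-1)$, and $t_1({\rm ht}(s_1)-1)\leq_I t_2({\rm ht}(s_1)-1)$. Set $(s_1,t_1)\leq_{S\otimes I}(s_2,t_2)$ iff the sequence $(s_1(0),t_1(0),\dots,s_1(h_1-1),t_1(h_1-1))$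 is lexicographically at most $(s_2(0),t_2(0),\dots,s_2(h_2-1),t_2(h_2-1))$, where $h_k={\rm ht}(s_k)$ and lexicographic comparison uses $\leq_S$ and $\leq_I$. *)

theory Defs
  imports Main
begin

definition porder_on :: "'a set \<Rightarrow> ('a \<Rightarrow> 'a \<Rightarrow> bool) \<Rightarrow> bool" where
  "porder_on A r \<longleftrightarrow>
     (\<forall>x\<in>A. r x x) \<and>
     (\<forall>x\<in>A. \<forall>y\<in>A. r x y \<and> r y x \<longrightarrow> x = y) \<and>
     (\<forall>x\<in>A. \<forall>y\<in>A. \<forall>z\<in>A. r x y \<and> r y z \<longrightarrow> r x z)"

definition lorder_on :: "'a set \<Rightarrow> ('a \<Rightarrow> 'a \<Rightarrow> bool) \<Rightarrow> bool" where
  "lorder_on A r \<longleftrightarrow> porder_on A r \<and> (\<forall>x\<in>A. \<forall>y\<in>A. r x y \<or> r y x)"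

definition forest :: "'a set \<Rightarrow> ('a \<Rightarrow> 'a \<Rightarrow> bool) \<Rightarrow> bool" where
  "forest S le \<longleftrightarrow> finite S \<and> porder_on S le \<and>
     (\<forall>s\<in>S. \<forall>x\<in>S. \<forall>y\<in>S. le x s \<and> le y s \<longrightarrow> le x y \<or> le y x)"

definition tree :: "'a set \<Rightarrow> ('a \<Rightarrow> 'a \<Rightarrow> bool) \<Rightarrow> bool" where
  "tree T le \<longleftrightarrow> forest T le \<and> (\<exists>r\<in>T. \<forall>x\<in>T. le r x)"

definition imm_succ :: "'a set \<Rightarrow> ('a \<Rightarrow> 'a \<Rightarrow> bool) \<Rightarrow> 'a \<Rightarrow> 'a \<Rightarrow> bool" where
  "imm_succ T le v w \<longleftrightarrow> v \<in> T \<and> w \<in> T \<and> le v w \<and> v \<noteq> w \<and>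
     (\<forall>u\<in>T. le v u \<and> le u w \<longrightarrow> u = v \<or> u = w)"

definition ordered_tree :: "'a set \<Rightarrow> ('a \<Rightarrow> 'a \<Rightarrow> bool) \<Rightarrow> ('a \<Rightarrow> 'a \<Rightarrow> 'a \<Rightarrow> bool) \<Rightarrow> bool" where
  "ordered_tree T le ord \<longleftrightarrow> tree T le \<and>
     (\<forall>v\<in>T. lorder_on {w. imm_succ T le v w} (ord v))"

definition is_meet :: "'a set \<Rightarrow> ('a \<Rightarrow> 'a \<Rightarrow> bool) \<Rightarrow> 'a \<Rightarrow> 'a \<Rightarrow> 'a \<Rightarrow> bool" where
  "is_meet T le m v w \<longleftrightarrow> m \<in> T \<and> le m v \<and> le m w \<and>
     (\<forall>u\<in>T. le u v \<and> le u w \<longrightarrow> le u m)"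

definition tree_lex :: "'a set \<Rightarrow> ('a \<Rightarrow> 'a \<Rightarrow> bool) \<Rightarrow> ('a \<Rightarrow> 'a \<Rightarrow> 'a \<Rightarrow> bool)
    \<Rightarrow> 'a \<Rightarrow> 'a \<Rightarrow> bool" where
  "tree_lex T le ord v w \<longleftrightarrow> le v w \<or>
     (\<not> le v w \<and> \<not> le w v \<and>
      (\<exists>m. is_meet T le m v w \<and>
         (\<exists>v' w'. imm_succ T le m v' \<and> le v' v \<and> imm_succ T le m w' \<and> le w' w
                 \<and> ord m v' w')))"

definition oplus_carrier :: "'a set \<Rightarrow> 'a option set" where
  "oplus_carrier S = insert None (Some ` S)"

definition oplus_le :: "('a \<Rightarrow> 'a \<Rightarrow> bool) \<Rightarrow> 'a option \<Rightarrow> 'a option \<Rightarrow> bool" where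
  "oplus_le le x y = (case x of None \<Rightarrow> True
                       | Some a \<Rightarrow> (case y of None \<Rightarrow> False | Some b \<Rightarrow> le a b))"

definition ordered_forest :: "'a set \<Rightarrow> ('a \<Rightarrow> 'a \<Rightarrow> bool) \<Rightarrow> ('a \<Rightarrow> 'a \<Rightarrow> bool) \<Rightarrow> bool" where
  "ordered_forest S le lo \<longleftrightarrow> forest S le \<and> lorder_on S lo \<and>
     (\<exists>ord. ordered_tree (oplus_carrier S) (oplus_le le) ord \<and>
        (\<forall>x\<in>S. \<forall>y\<in>S. lo x y \<longleftrightarrow>
            tree_lex (oplus_carrier S) (oplus_le le) ord (Some x) (Some y)))"

definition ht :: "'a set \<Rightarrow> ('a \<Rightarrow> 'a \<Rightarrow> bool) \<Rightarrow> 'a \<Rightarrow> nat" where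
  "ht S le s = card {x\<in>S. le x s}"

definition forest_ht :: "'a set \<Rightarrow> ('a \<Rightarrow> 'a \<Rightarrow> bool) \<Rightarrow> nat" where
  "forest_ht S le = Max (ht S le ` S)"

definition pred_at :: "'a set \<Rightarrow> ('a \<Rightarrow> 'a \<Rightarrow> bool) \<Rightarrow> 'a \<Rightarrow> nat \<Rightarrow> 'a" where
  "pred_at S le s i = (THE x. x \<in> S \<and> le x s \<and> ht S le x = Suc i)"

definition tensor :: "'a set \<Rightarrow> ('a \<Rightarrow> 'a \<Rightarrow> bool) \<Rightarrow> 'i set \<Rightarrow> ('a \<times> 'i list) set" where
  "tensor S le I = {(s, t). s \<in> S \<and> set t \<subseteq> I \<and> length t \<le> forest_ht S le
                            \<and> length t = ht S le s}"

definition tensor_le :: "'a set \<Rightarrow> ('a \<Rightarrow> 'a \<Rightarrow> bool) \<Rightarrow> ('i \<Rightarrow> 'i \<Rightarrow> bool)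
    \<Rightarrow> 'a \<times> 'i list \<Rightarrow> 'a \<times> 'i list \<Rightarrow> bool" where
  "tensor_le S le leI p q = (case p of (s1, t1) \<Rightarrow> case q of (s2, t2) \<Rightarrow>
     le s1 s2 \<and> take (ht S le s1 - 1) t1 = take (ht S le s1 - 1) t2 \<and>
     leI (t1 ! (ht S le s1 - 1)) (t2 ! (ht S le s1 - 1)))"

definition list_lex_le :: "('b \<Rightarrow> 'b \<Rightarrow> bool) \<Rightarrow> 'b list \<Rightarrow> 'b list \<Rightarrow> bool" where
  "list_lex_le r xs ys \<longleftrightarrow> (\<exists>zs. ys = xs @ zs) \<or>
     (\<exists>p a b xs' ys'. xs = p @ a # xs' \<and> ys = p @ b # ys' \<and> r a b \<and> a \<noteq> b)"

definition interleave :: "'a set \<Rightarrow> ('a \<Rightarrow> 'a \<Rightarrow> bool) \<Rightarrow> 'a \<times> 'i list \<Rightarrow> ('a + 'i) list" where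
  "interleave S le p = (case p of (s, t) \<Rightarrow>
     concat (map (\<lambda>i. [Inl (pred_at S le s i), Inr (t ! i)]) [0..<ht S le s]))"

definition sum_le :: "('a \<Rightarrow> 'a \<Rightarrow> bool) \<Rightarrow> ('i \<Rightarrow> 'i \<Rightarrow> bool) \<Rightarrow> 'a + 'i \<Rightarrow> 'a + 'i \<Rightarrow> bool" where
  "sum_le lo leI x y = (case x of
       Inl a \<Rightarrow> (case y of Inl b \<Rightarrow> lo a b | Inr _ \<Rightarrow> False)
     | Inr a \<Rightarrow> (case y of Inl _ \<Rightarrow> False | Inr b \<Rightarrow> leI a b))"

definition tensor_lo :: "'a set \<Rightarrow> ('a \<Rightarrow> 'a \<Rightarrow> bool) \<Rightarrow> ('a \<Rightarrow> 'a \<Rightarrow> bool) \<Rightarrow> ('i \<Rightarrow> 'i \<Rightarrow> bool)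
    \<Rightarrow> 'a \<times> 'i list \<Rightarrow> 'a \<times> 'i list \<Rightarrow> bool" where
  "tensor_lo S le lo leI p q =
     list_lex_le (sum_le lo leI) (interleave S le p) (interleave S le q)"

end

theory Submission
  imports Defs
begin

text \<open>Encode \<open>(s, t) \<in> S \<otimes> I\<close> by the word \<open>s(0) t(0) \<dots> s(h-1) t(h-1)\<close> over \<open>S + I\<close>. This
  encoding is injective, it turns \<open>\<le>\<^bsub>S\<otimes>I\<^esub>\<close> into the lexicographic order, and it turns
  \<open>\<sqsubseteq>\<^bsub>S\<otimes>I\<^esub>\<close> into the relation ``agree before the last letter of the first word, and be
  below the second word there''. On words whose letters are pairwise comparable position by
  position, that relation is a forest order. The lexicographic order extends it linearly, and for
  incomparable words it is decided strictly before the last letter of either word, so it orders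
  the upsets of incomparable elements as it orders the elements. Every linear extension of a
  forest order with this property is the lexicographic order of \<open>1 \<oplus> T\<close> ordered at each node
  by the extension itself.\<close>

section \<open>Lexicographic order on lists\<close>

lemma list_lex_le_iff_nth:
  "list_lex_le r xs ys \<longleftrightarrow>
     (length xs \<le> length ys \<and> (\<forall>j<length xs. xs!j = ys!j)) \<or>
     (\<exists>k<length xs. k < length ys \<and> (\<forall>j<k. xs!j = ys!j) \<and> xs!k \<noteq> ys!k \<and> r (xs!k) (ys!k))"
  (is "_ \<longleftrightarrow> ?prefix \<or> ?differ")
proof
  assume "list_lex_le r xs ys"
  then consider zs where "ys = xs @ zs"
    | p a b xs' ys' where "xs = p @ a # xs'" "ys = p @ b # ys'" "r a b" "a \<noteq> b"
    unfolding list_lex_le_def by blast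
  then show "?prefix \<or> ?differ"
  proof cases
    case 1
    then show ?thesis by (auto simp: nth_append)
  next
    case (2 p a b)
    then have "?differ" by (intro exI[of _ "length p"]) (auto simp: nth_append)
    then show ?thesis ..
  qed
next
  assume "?prefix \<or> ?differ"
  then show "list_lex_le r xs ys"
  proof
    assume ?prefix
    then have "take (length xs) ys = xs" by (intro nth_equalityI) auto
    then have "ys = xs @ drop (length xs) ys" by (metis append_take_drop_id)
    then show ?thesis unfolding list_lex_le_def by blast
  next
    assume ?differ
    then obtain k where k: "k < length xs" "k < length ys" "\<forall>j<k. xs!j = ys!j"
      "xs!k \<noteq> ys!k" "r (xs!k) (ys!k)" by blast
    have "take k xs = take k ys" by (rule nth_equalityI) (use k in auto)
    then have "xs = take k xs @ xs!k # drop (Suc k) xs" "ys = take k xs @ ys!k # drop (Suc k) ys"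
      using id_take_nth_drop k(1,2) by metis+
    then show ?thesis using k unfolding list_lex_le_def by blast
  qed
qed

lemma list_lex_le_refl: "list_lex_le r xs xs"
  unfolding list_lex_le_def by blast

lemma
  assumes "porder_on A r"
  shows porder_on_refl: "a \<in> A \<Longrightarrow> r a a"
    and porder_on_antisym: "a \<in> A \<Longrightarrow> b \<in> A \<Longrightarrow> r a b \<Longrightarrow> r b a \<Longrightarrow> a = b"
    and porder_on_trans: "a \<in> A \<Longrightarrow> b \<in> A \<Longrightarrow> c \<in> A \<Longrightarrow> r a b \<Longrightarrow> r b c \<Longrightarrow> r a c"
  using assms unfolding porder_on_def by blast+

lemma nth_in_subset: "set xs \<subseteq> A \<Longrightarrow> j < length xs \<Longrightarrow> xs!j \<in> A"
  by (meson nth_mem subsetD)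

lemma list_lex_le_antisym:
  assumes r: "porder_on A r" and A: "set xs \<subseteq> A" "set ys \<subseteq> A"
    and "list_lex_le r xs ys" "list_lex_le r ys xs"
  shows "xs = ys"
  using assms(4,5) unfolding list_lex_le_iff_nth
proof (elim disjE exE conjE)
  fix k k' assume k: "k < length xs" "k < length ys" "\<forall>j<k. xs!j = ys!j" "xs!k \<noteq> ys!k" "r (xs!k) (ys!k)"
    and k': "k' < length ys" "k' < length xs" "\<forall>j<k'. ys!j = xs!j" "ys!k' \<noteq> xs!k'" "r (ys!k') (xs!k')"
  have "k = k'" using k k' by (metis linorder_neqE_nat)
  then show ?thesis
    using k k' porder_on_antisym[OF r nth_in_subset[OF A(1) k(1)] nth_in_subset[OF A(2) k(2)]] by simp
qed (auto intro: nth_equalityI)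

lemma list_lex_le_trans:
  assumes r: "porder_on A r" and A: "set xs \<subseteq> A" "set ys \<subseteq> A" "set zs \<subseteq> A"
    and "list_lex_le r xs ys" "list_lex_le r ys zs"
  shows "list_lex_le r xs zs"
  using assms(5,6)[unfolded list_lex_le_iff_nth]
proof (elim disjE exE conjE)
  fix k assume "length xs \<le> length ys" "\<forall>j<length xs. xs!j = ys!j"
    and "k < length ys" "k < length zs" "\<forall>j<k. ys!j = zs!j" "ys!k \<noteq> zs!k" "r (ys!k) (zs!k)"
  then show ?thesis
    unfolding list_lex_le_iff_nth by (cases "k < length xs") (auto intro!: exI[of _ k])
next
  fix k k' assume k: "k < length xs" "k < length ys" "\<forall>j<k. xs!j = ys!j" "xs!k \<noteq> ys!k" "r (xs!k) (ys!k)"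
    and k': "k' < length ys" "k' < length zs" "\<forall>j<k'. ys!j = zs!j" "ys!k' \<noteq> zs!k'" "r (ys!k') (zs!k')"
  consider "k < k'" | "k' < k" | "k = k'" by linarith
  then show ?thesis
  proof cases
    case 1
    then show ?thesis using k k' unfolding list_lex_le_iff_nth by (auto intro!: exI[of _ k])
  next
    case 2
    then show ?thesis using k k' unfolding list_lex_le_iff_nth by (auto intro!: exI[of _ k'])
  next
    case 3
    have in_A: "xs!k \<in> A" "ys!k \<in> A" "zs!k \<in> A"
      using A k k' 3 by (auto intro: nth_in_subset)
    have "r (xs!k) (zs!k)" using porder_on_trans[OF r in_A] k k' 3 by simp
    moreover have "xs!k \<noteq> zs!k" using porder_on_antisym[OF r in_A(1,2)] k k' 3 by auto
    ultimately show ?thesis using k k' 3 unfolding list_lex_le_iff_nth by (auto intro!: exI[of _ k])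
  qed
qed (auto simp: list_lex_le_iff_nth intro!: exI)

definition componentwise_comparable :: "('b \<Rightarrow> 'b \<Rightarrow> bool) \<Rightarrow> 'b list \<Rightarrow> 'b list \<Rightarrow> bool" where
  "componentwise_comparable r xs ys \<longleftrightarrow>
     (\<forall>j. j < length xs \<longrightarrow> j < length ys \<longrightarrow> r (xs!j) (ys!j) \<or> r (ys!j) (xs!j))"

lemma componentwise_comparable_sym:
  "componentwise_comparable r xs ys \<Longrightarrow> componentwise_comparable r ys xs"
  unfolding componentwise_comparable_def by blast

lemma list_lex_le_total:
  assumes "componentwise_comparable r xs ys"
  shows "list_lex_le r xs ys \<or> list_lex_le r ys xs"
proof (cases "\<exists>k<min (length xs) (length ys). xs!k \<noteq> ys!k")
  case False
  then show ?thesis unfolding list_lex_le_iff_nth by (metis min.absorb1 min.absorb2 nle_le)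
next
  case True
  define k where "k = (LEAST k. k < min (length xs) (length ys) \<and> xs!k \<noteq> ys!k)"
  have k: "k < min (length xs) (length ys)" "xs!k \<noteq> ys!k"
    using LeastI_ex[OF True[unfolded Bex_def]] unfolding k_def by blast+
  have "\<forall>j<k. xs!j = ys!j"
    using not_less_Least k(1) unfolding k_def by fastforce
  moreover have "r (xs!k) (ys!k) \<or> r (ys!k) (xs!k)"
    using assms k unfolding componentwise_comparable_def by auto
  ultimately show ?thesis unfolding list_lex_le_iff_nth using k by (metis min_less_iff_conj)
qed

text \<open>The word counterpart of \<open>\<sqsubseteq>\<^bsub>S\<otimes>I\<^esub>\<close>.\<close>

definition prefix_below :: "('b \<Rightarrow> 'b \<Rightarrow> bool) \<Rightarrow> 'b list \<Rightarrow> 'b list \<Rightarrow> bool" where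
  "prefix_below r xs ys \<longleftrightarrow> xs \<noteq> [] \<and> length xs \<le> length ys \<and>
     (\<forall>j<length xs - 1. xs!j = ys!j) \<and> r (xs!(length xs - 1)) (ys!(length xs - 1))"

lemma prefix_below_refl:
  assumes "porder_on A r" "set xs \<subseteq> A" "xs \<noteq> []"
  shows "prefix_below r xs xs"
  using assms porder_on_refl[OF assms(1) nth_in_subset[OF assms(2)]] unfolding prefix_below_def by simp

lemma prefix_below_antisym:
  assumes r: "porder_on A r" and A: "set xs \<subseteq> A" "set ys \<subseteq> A"
    and xy: "prefix_below r xs ys" and yx: "prefix_below r ys xs"
  shows "xs = ys"
proof (rule nth_equalityI)
  show len: "length xs = length ys" using xy yx unfolding prefix_below_def by simp
  fix j assume j: "j < length xs"
  show "xs!j = ys!j"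
  proof (cases "j < length xs - 1")
    case False
    then have "j = length xs - 1" using j by simp
    then show ?thesis
      using xy yx len porder_on_antisym[OF r nth_in_subset[OF A(1) j] nth_in_subset[OF A(2)]] j
      unfolding prefix_below_def by simp
  qed (use xy in \<open>simp add: prefix_below_def\<close>)
qed

lemma prefix_below_trans:
  assumes r: "porder_on A r" and A: "set xs \<subseteq> A" "set ys \<subseteq> A" "set zs \<subseteq> A"
    and xy: "prefix_below r xs ys" and yz: "prefix_below r ys zs"
  shows "prefix_below r xs zs"
proof -
  let ?k = "length xs - 1" and ?l = "length ys - 1"
  have len: "xs \<noteq> []" "length xs \<le> length ys" "length ys \<le> length zs"
    using xy yz unfolding prefix_below_def by auto
  have "r (xs!?k) (zs!?k)"
  proof (cases "?k < ?l")
    case True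
    then show ?thesis using xy yz unfolding prefix_below_def by simp
  next
    case False
    then have "?k = ?l" using len by simp
    moreover have "?k < length xs" "?k < length ys" "?k < length zs"
      using len length_greater_0_conv[of xs] by linarith+
    ultimately show ?thesis
      using xy yz porder_on_trans[OF r, of "xs!?k" "ys!?k" "zs!?k"] A
      unfolding prefix_below_def by (simp add: nth_in_subset)
  qed
  then show ?thesis using xy yz len unfolding prefix_below_def by auto
qed

lemma prefix_below_chain:
  assumes "componentwise_comparable r xs ys"
    and "prefix_below r xs zs" "prefix_below r ys zs"
  shows "prefix_below r xs ys \<or> prefix_below r ys xs"
proof -
  have *: "prefix_below r xs ys \<or> prefix_below r ys xs"
    if "length xs \<le> length ys" "componentwise_comparable r xs ys"
      "prefix_below r xs zs" "prefix_below r ys zs" for xs ys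
  proof (cases "length xs - 1 < length ys - 1")
    case True
    then show ?thesis using that unfolding prefix_below_def by simp
  next
    case False
    moreover have "0 < length xs" "0 < length ys" using that unfolding prefix_below_def by auto
    ultimately have "length xs = length ys" "length xs - 1 < length xs"
      using that(1) by linarith+
    then show ?thesis
      using that unfolding prefix_below_def componentwise_comparable_def by auto
  qed
  show ?thesis
  proof (cases "length xs \<le> length ys")
    case True
    then show ?thesis using * assms by blast
  next
    case False
    then show ?thesis using *[of ys xs] assms componentwise_comparable_sym by auto
  qed
qed

lemma prefix_below_imp_list_lex_le:
  assumes "prefix_below r xs ys"
  shows "list_lex_le r xs ys"
proof (cases "xs!(length xs - 1) = ys!(length xs - 1)")
  case True
  then have "\<forall>j<length xs. xs!j = ys!j"
    using assms unfolding prefix_below_def by (metis less_Suc_eq Suc_pred' length_greater_0_conv)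
  then show ?thesis using assms unfolding list_lex_le_iff_nth prefix_below_def by simp
next
  case False
  moreover have "length xs - 1 < length ys"
    using assms unfolding prefix_below_def by (cases xs) auto
  ultimately show ?thesis using assms unfolding list_lex_le_iff_nth prefix_below_def
    by (intro disjI2 exI[of _ "length xs - 1"]) auto
qed

text \<open>The lexicographic comparison of \<open>prefix_below\<close>-incomparable words is decided strictly
  before the last letter of either, hence it persists in their \<open>prefix_below\<close>-successors.\<close>

lemma list_lex_le_above_incomparable:
  assumes r: "porder_on A r" and A: "set ys \<subseteq> A" "set xs' \<subseteq> A" "set ys' \<subseteq> A"
    and x: "prefix_below r xs' xs" and y: "prefix_below r ys' ys"
    and incomparable: "\<not> prefix_below r xs' ys'" "\<not> prefix_below r ys' xs'"
    and lex: "list_lex_le r xs' ys'"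
  shows "list_lex_le r xs ys"
proof -
  let ?a = "length xs' - 1" and ?b = "length ys' - 1"
  have len: "0 < length xs'" "0 < length ys'" "length xs' \<le> length xs" "length ys' \<le> length ys"
    using x y unfolding prefix_below_def by auto
  have not_prefix: "\<not> (length xs' \<le> length ys' \<and> (\<forall>j<length xs'. xs'!j = ys'!j))"
  proof
    assume prefix: "length xs' \<le> length ys' \<and> (\<forall>j<length xs'. xs'!j = ys'!j)"
    have "?a < length xs'" using len by simp
    then have "r (xs'!?a) (ys'!?a)"
      using prefix porder_on_refl[OF r nth_in_subset[OF A(2)]] by metis
    then show False using prefix len incomparable(1) unfolding prefix_below_def by simp
  qed
  then obtain k where k: "k < length xs'" "k < length ys'" "\<forall>j<k. xs'!j = ys'!j"
    "xs'!k \<noteq> ys'!k" "r (xs'!k) (ys'!k)"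
    using lex unfolding list_lex_le_iff_nth by blast
  have "k \<noteq> ?a" using k incomparable(1) unfolding prefix_below_def by auto
  then have "k < ?a" using k by simp
  then have xs_eq: "\<forall>j\<le>k. xs!j = xs'!j" using x unfolding prefix_below_def by auto
  have "xs!k \<noteq> ys!k \<and> r (xs!k) (ys!k)"
  proof (cases "k < ?b")
    case True
    then show ?thesis using xs_eq y k unfolding prefix_below_def by simp
  next
    case False
    then have kb: "k = ?b" using k by simp
    have in_A: "xs'!k \<in> A" "ys'!k \<in> A" "ys!k \<in> A"
      using A k len by (auto intro: nth_in_subset)
    have "r (ys'!k) (ys!k)" using y kb unfolding prefix_below_def by simp
    then have "r (xs'!k) (ys!k) \<and> xs'!k \<noteq> ys!k"
      using porder_on_trans[OF r in_A] porder_on_antisym[OF r in_A(2,1)] k by auto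
    then show ?thesis using xs_eq by simp
  qed
  moreover have "\<forall>j<k. xs!j = ys!j" using xs_eq k y unfolding prefix_below_def by auto
  ultimately show ?thesis using k len unfolding list_lex_le_iff_nth by (auto intro!: exI[of _ k])
qed

section \<open>Heights and meets in a forest\<close>

locale forest_on =
  fixes S :: "'a set" and le :: "'a \<Rightarrow> 'a \<Rightarrow> bool"
  assumes forest: "forest S le"
begin

lemma finite_carrier: "finite S"
  using forest unfolding forest_def by blast

lemma forest_refl: "x \<in> S \<Longrightarrow> le x x"
  using forest unfolding forest_def porder_on_def by blast

lemma forest_antisym: "x \<in> S \<Longrightarrow> y \<in> S \<Longrightarrow> le x y \<Longrightarrow> le y x \<Longrightarrow> x = y"
  using forest unfolding forest_def porder_on_def by blast

lemma forest_trans: "x \<in> S \<Longrightarrow> y \<in> S \<Longrightarrow> z \<in> S \<Longrightarrow> le x y \<Longrightarrow> le y z \<Longrightarrow> le x z"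
  using forest unfolding forest_def porder_on_def by blast

lemma predecessors_chain: "s \<in> S \<Longrightarrow> x \<in> S \<Longrightarrow> y \<in> S \<Longrightarrow> le x s \<Longrightarrow> le y s \<Longrightarrow> le x y \<or> le y x"
  using forest unfolding forest_def by blast

lemma ht_pos: "s \<in> S \<Longrightarrow> 0 < ht S le s"
  unfolding ht_def using finite_carrier forest_refl by (auto simp: card_gt_0_iff)

lemma ht_mono: "x \<in> S \<Longrightarrow> s \<in> S \<Longrightarrow> le x s \<Longrightarrow> ht S le x \<le> ht S le s"
  unfolding ht_def using finite_carrier by (intro card_mono) (auto dest: forest_trans[of _ x s])

lemma ht_strict_mono:
  assumes "x \<in> S" "s \<in> S" "le x s" "x \<noteq> s"
  shows "ht S le x < ht S le s"
  unfolding ht_def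
proof (rule psubset_card_mono)
  show "finite {y \<in> S. le y s}" using finite_carrier by auto
  have "s \<notin> {y \<in> S. le y x}" "s \<in> {y \<in> S. le y s}" using assms forest_antisym forest_refl by auto
  moreover have "{y \<in> S. le y x} \<subseteq> {y \<in> S. le y s}" using assms by (auto dest: forest_trans[of _ x s])
  ultimately show "{y \<in> S. le y x} \<subset> {y \<in> S. le y s}" by blast
qed

lemma predecessor_ht_inj:
  assumes "s \<in> S" "x \<in> S" "y \<in> S" "le x s" "le y s" "ht S le x = ht S le y"
  shows "x = y"
  using predecessors_chain[OF assms(1-5)] ht_strict_mono assms(2,3,6) by fastforce

lemma ex1_predecessor_of_ht:
  assumes "s \<in> S" "i < ht S le s"
  shows "\<exists>!x. x \<in> S \<and> le x s \<and> ht S le x = Suc i"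
proof -
  let ?P = "{x\<in>S. le x s}"
  have "inj_on (ht S le) ?P"
    using predecessor_ht_inj[OF assms(1)] by (auto intro: inj_onI)
  then have "card (ht S le ` ?P) = ht S le s"
    unfolding ht_def by (simp add: card_image)
  moreover have "ht S le ` ?P \<subseteq> {1..ht S le s}"
    using ht_pos ht_mono assms(1) by (auto simp: Suc_le_eq)
  ultimately have "ht S le ` ?P = {1..ht S le s}" by (intro card_subset_eq) auto
  then have "Suc i \<in> ht S le ` ?P" using assms(2) by simp
  then obtain x where "x \<in> S" "le x s" "ht S le x = Suc i" by auto
  then show ?thesis using predecessor_ht_inj[OF assms(1)] by metis
qed

lemma pred_at:
  assumes "s \<in> S" "i < ht S le s"
  shows "pred_at S le s i \<in> S" "le (pred_at S le s i) s" "ht S le (pred_at S le s i) = Suc i"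
  using theI'[OF ex1_predecessor_of_ht[OF assms]] unfolding pred_at_def by auto

lemma pred_at_eqI:
  "s \<in> S \<Longrightarrow> i < ht S le s \<Longrightarrow> x \<in> S \<Longrightarrow> le x s \<Longrightarrow> ht S le x = Suc i \<Longrightarrow> pred_at S le s i = x"
  using predecessor_ht_inj pred_at by metis

lemma pred_at_last: "s \<in> S \<Longrightarrow> pred_at S le s (ht S le s - 1) = s"
  using pred_at_eqI ht_pos forest_refl by simp

lemma le_iff_pred_at:
  assumes "x \<in> S" "s \<in> S"
  shows "le x s \<longleftrightarrow> ht S le x \<le> ht S le s \<and> (\<forall>i<ht S le x. pred_at S le x i = pred_at S le s i)"
proof
  assume le: "le x s"
  then have "ht S le x \<le> ht S le s" using assms ht_mono by blast
  moreover have "pred_at S le s i = pred_at S le x i" if "i < ht S le x" for i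
    using pred_at[OF assms(1) that] forest_trans[OF _ assms _ le] calculation that
    by (intro pred_at_eqI[OF assms(2)]) auto
  ultimately show "ht S le x \<le> ht S le s \<and> (\<forall>i<ht S le x. pred_at S le x i = pred_at S le s i)"
    by simp
next
  assume pred: "ht S le x \<le> ht S le s \<and> (\<forall>i<ht S le x. pred_at S le x i = pred_at S le s i)"
  have "ht S le x - 1 < ht S le x" using ht_pos assms(1) by simp
  then show "le x s"
    using pred pred_at_last[OF assms(1)] pred_at(2)[OF assms(2)] by (metis order_less_le_trans)
qed

lemma meet_exists:
  assumes "x \<in> S" "y \<in> S" "r \<in> S" "le r x" "le r y"
  shows "\<exists>m. is_meet S le m x y"
proof -
  let ?lower = "\<lambda>u. u \<in> S \<and> le u x \<and> le u y"
  have "\<forall>u. ?lower u \<longrightarrow> ht S le u < Suc (ht S le x)"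
    using ht_mono assms(1) by (simp add: less_Suc_eq_le)
  then obtain m where m: "?lower m" and highest: "\<And>u. ?lower u \<Longrightarrow> ht S le u \<le> ht S le m"
    using Lattices_Big.ex_has_greatest_nat[of ?lower r] assms by blast
  have "le u m" if "?lower u" for u
    using predecessors_chain[OF assms(1), of u m] ht_strict_mono[of m u] highest[OF that] forest_refl m that
    by fastforce
  then show ?thesis unfolding is_meet_def using m by blast
qed

lemma imm_succ_exists:
  assumes "m \<in> S" "x \<in> S" "le m x" "m \<noteq> x"
  shows "\<exists>v. imm_succ S le m v \<and> le v x"
proof -
  let ?above = "\<lambda>u. u \<in> S \<and> le m u \<and> u \<noteq> m \<and> le u x"
  obtain v where v: "?above v" and lowest: "\<And>u. ?above u \<Longrightarrow> ht S le v \<le> ht S le u"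
    using ex_has_least_nat[of ?above x "ht S le"] assms forest_refl by blast
  have "u = m \<or> u = v" if "u \<in> S" "le m u" "le u v" for u
    using lowest[of u] ht_mono[of u v] ht_strict_mono[of u v] forest_trans[of u v x] v that assms(2)
    by fastforce
  then have "imm_succ S le m v" unfolding imm_succ_def using v assms(1) by blast
  then show ?thesis using v by blast
qed

end

section \<open>A criterion for ordered forests\<close>

definition upsets_ordered :: "'a set \<Rightarrow> ('a \<Rightarrow> 'a \<Rightarrow> bool) \<Rightarrow> ('a \<Rightarrow> 'a \<Rightarrow> bool) \<Rightarrow> bool" where
  "upsets_ordered S le L \<longleftrightarrow> (\<forall>x'\<in>S. \<forall>x\<in>S. \<forall>y'\<in>S. \<forall>y\<in>S.
     le x' x \<and> le y' y \<and> \<not> le x' y' \<and> \<not> le y' x' \<and> L x' y' \<longrightarrow> L x y)"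

lemma (in forest_on) imm_succs_of_meet_incomparable:
  assumes "is_meet S le m x y" "x \<in> S" "y \<in> S"
    and v: "imm_succ S le m v" "le v x" and w: "imm_succ S le m w" "le w y"
  shows "\<not> le v w" "\<not> le w v"
proof -
  have vw: "v \<in> S" "w \<in> S" "m \<in> S" "m \<noteq> v" "m \<noteq> w" "le m v" "le m w"
    using v w unfolding imm_succ_def by auto
  have below_meet: "\<And>u. u \<in> S \<Longrightarrow> le u x \<Longrightarrow> le u y \<Longrightarrow> le u m"
    using assms(1) unfolding is_meet_def by blast
  show "\<not> le v w"
  proof
    assume "le v w"
    then have "le v m" using below_meet[of v] forest_trans[of v w y] vw v w assms(3) by blast
    then show False using forest_antisym[of m v] vw by blast
  qed
  show "\<not> le w v"
  proof
    assume "le w v"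
    then have "le w m" using below_meet[of w] forest_trans[of w v x] vw v w assms(2) by blast
    then show False using forest_antisym[of m w] vw by blast
  qed
qed

lemma (in forest_on) tree_lex_eq_linear_extension:
  assumes root: "r \<in> S" "\<forall>x\<in>S. le r x"
    and lin: "lorder_on S L" and ext: "\<forall>x\<in>S. \<forall>y\<in>S. le x y \<longrightarrow> L x y"
    and up: "upsets_ordered S le L" and xy: "x \<in> S" "y \<in> S"
  shows "tree_lex S le (\<lambda>_. L) x y \<longleftrightarrow> L x y"
proof
  assume "tree_lex S le (\<lambda>_. L) x y"
  then consider "le x y" | m v w where "is_meet S le m x y"
      "imm_succ S le m v" "le v x" "imm_succ S le m w" "le w y" "L v w"
    unfolding tree_lex_def by blast
  then show "L x y"
  proof cases
    case 1
    then show ?thesis using ext xy by blast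
  next
    case (2 m v w)
    then have "v \<in> S" "w \<in> S" unfolding imm_succ_def by auto
    moreover have "\<not> le v w" "\<not> le w v"
      using imm_succs_of_meet_incomparable[OF 2(1) xy 2(2-5)] by blast+
    ultimately show ?thesis using up 2 xy unfolding upsets_ordered_def by blast
  qed
next
  assume Lxy: "L x y"
  have L_antisym: "L y x \<Longrightarrow> x = y" and L_total: "\<And>a b. a \<in> S \<Longrightarrow> b \<in> S \<Longrightarrow> L a b \<or> L b a"
    using lin Lxy xy unfolding lorder_on_def porder_on_def by blast+
  show "tree_lex S le (\<lambda>_. L) x y"
  proof (cases "le x y \<or> le y x")
    case True
    then show ?thesis using ext xy L_antisym forest_refl unfolding tree_lex_def by blast
  next
    case incomparable: False
    obtain m where m: "is_meet S le m x y" using meet_exists[OF xy root(1)] root xy by blast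
    then have "m \<in> S" "le m x" "le m y" "m \<noteq> x" "m \<noteq> y"
      using incomparable unfolding is_meet_def by auto
    then obtain v w where v: "imm_succ S le m v" "le v x" and w: "imm_succ S le m w" "le w y"
      using imm_succ_exists xy by metis
    have "v \<in> S" "w \<in> S" using v w unfolding imm_succ_def by auto
    moreover have "\<not> le v w" "\<not> le w v"
      using imm_succs_of_meet_incomparable[OF m xy v w] by blast+
    ultimately have "L w v \<Longrightarrow> L y x"
      using up xy v w unfolding upsets_ordered_def by blast
    then have "L v w"
      using L_total[of v w] L_antisym incomparable forest_refl[OF xy(1)] \<open>v \<in> S\<close> \<open>w \<in> S\<close> by blast
    then show ?thesis unfolding tree_lex_def using incomparable m v w by blast
  qed
qed

lemma oplus_le_simps [simp]:
  "oplus_le r None y" "\<not> oplus_le r (Some a) None" "oplus_le r (Some a) (Some b) \<longleftrightarrow> r a b"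
  by (simp_all add: oplus_le_def)

lemma ball_oplus_carrier: "(\<forall>x\<in>oplus_carrier F. P x) \<longleftrightarrow> P None \<and> (\<forall>a\<in>F. P (Some a))"
  unfolding oplus_carrier_def by auto

lemmas oplus_simps = ball_oplus_carrier oplus_le_simps simp_thms option.inject option.distinct

lemma porder_on_oplus: "porder_on F r \<Longrightarrow> porder_on (oplus_carrier F) (oplus_le r)"
  unfolding porder_on_def by (simp only: oplus_simps) blast

lemma lorder_on_oplus: "lorder_on F r \<Longrightarrow> lorder_on (oplus_carrier F) (oplus_le r)"
  using porder_on_oplus unfolding lorder_on_def by (simp only: oplus_simps) blast

lemma forest_oplus:
  assumes "forest F r"
  shows "forest (oplus_carrier F) (oplus_le r)"
proof -
  have "finite (oplus_carrier F)" "porder_on (oplus_carrier F) (oplus_le r)"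
    using assms porder_on_oplus unfolding forest_def oplus_carrier_def by auto
  moreover have "\<forall>s\<in>oplus_carrier F. \<forall>x\<in>oplus_carrier F. \<forall>y\<in>oplus_carrier F.
      oplus_le r x s \<and> oplus_le r y s \<longrightarrow> oplus_le r x y \<or> oplus_le r y x"
    using assms unfolding forest_def by (simp only: oplus_simps) blast
  ultimately show ?thesis unfolding forest_def by blast
qed

lemma upsets_ordered_oplus:
  "upsets_ordered F le L \<Longrightarrow> upsets_ordered (oplus_carrier F) (oplus_le le) (oplus_le L)"
  unfolding upsets_ordered_def by (simp only: oplus_simps) blast

lemma lorder_on_subset: "lorder_on A r \<Longrightarrow> B \<subseteq> A \<Longrightarrow> lorder_on B r"
  unfolding lorder_on_def porder_on_def by blast

lemma ordered_forestI:
  assumes forest: "forest F le" and lin: "lorder_on F L"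
    and ext: "\<forall>x\<in>F. \<forall>y\<in>F. le x y \<longrightarrow> L x y" and up: "upsets_ordered F le L"
  shows "ordered_forest F le L"
proof -
  let ?T = "oplus_carrier F" and ?le = "oplus_le le" and ?L = "oplus_le L"
  interpret oplus: forest_on ?T ?le
    using forest_oplus[OF forest] by unfold_locales
  have root: "None \<in> ?T" "\<forall>x\<in>?T. ?le None x"
    unfolding oplus_carrier_def by auto
  have lin': "lorder_on ?T ?L" using lorder_on_oplus[OF lin] .
  have "ordered_tree ?T ?le (\<lambda>_. ?L)"
    unfolding ordered_tree_def tree_def
  proof (intro conjI ballI)
    show "\<exists>r\<in>?T. \<forall>x\<in>?T. ?le r x" using root by blast
    show "lorder_on {w. imm_succ ?T ?le v w} ?L" for v
      by (rule lorder_on_subset[OF lin']) (auto simp: imm_succ_def)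
  qed (rule oplus.forest)
  moreover have "tree_lex ?T ?le (\<lambda>_. ?L) (Some x) (Some y) \<longleftrightarrow> L x y" if "x \<in> F" "y \<in> F" for x y
    using oplus.tree_lex_eq_linear_extension[OF root lin' _ upsets_ordered_oplus[OF up]] ext that
    by (simp add: ball_oplus_carrier oplus_carrier_def)
  ultimately show ?thesis unfolding ordered_forest_def using forest lin by blast
qed

lemma ordered_forest_via_lists:
  assumes fin: "finite T" and r: "porder_on A r" and inj: "inj_on f T"
    and lists: "\<And>p. p \<in> T \<Longrightarrow> f p \<noteq> [] \<and> set (f p) \<subseteq> A"
    and comparable: "\<And>p q. p \<in> T \<Longrightarrow> q \<in> T \<Longrightarrow> componentwise_comparable r (f p) (f q)"
    and R: "\<And>p q. p \<in> T \<Longrightarrow> q \<in> T \<Longrightarrow> R p q \<longleftrightarrow> prefix_below r (f p) (f q)"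
    and L: "\<And>p q. p \<in> T \<Longrightarrow> q \<in> T \<Longrightarrow> L p q \<longleftrightarrow> list_lex_le r (f p) (f q)"
  shows "forest T R" "ordered_forest T R L"
proof -
  have eq: "p = q" if "p \<in> T" "q \<in> T" "f p = f q" for p q
    using inj_onD[OF inj] that by blast
  have "porder_on T R"
    unfolding porder_on_def
  proof (intro conjI ballI impI)
    show "R p p" if "p \<in> T" for p
      using prefix_below_refl[OF r] lists R that by blast
    show "p = q" if "p \<in> T" "q \<in> T" "R p q \<and> R q p" for p q
      using prefix_below_antisym[OF r] lists R eq that by blast
    show "R p s" if "p \<in> T" "q \<in> T" "s \<in> T" "R p q \<and> R q s" for p q s
      using prefix_below_trans[OF r] lists R that by blast
  qed
  moreover have "R x y \<or> R y x" if "s \<in> T" "x \<in> T" "y \<in> T" "R x s" "R y s" for s x y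
    using prefix_below_chain[OF comparable] R that by blast
  ultimately show forest: "forest T R" unfolding forest_def using fin by blast
  have "lorder_on T L"
    unfolding lorder_on_def porder_on_def
  proof (intro conjI ballI impI)
    show "L p p" if "p \<in> T" for p
      using list_lex_le_refl L that by blast
    show "p = q" if "p \<in> T" "q \<in> T" "L p q \<and> L q p" for p q
      using list_lex_le_antisym[OF r] lists L eq that by blast
    show "L p s" if "p \<in> T" "q \<in> T" "s \<in> T" "L p q \<and> L q s" for p q s
      using list_lex_le_trans[OF r] lists L that by blast
    show "L p q \<or> L q p" if "p \<in> T" "q \<in> T" for p q
      using list_lex_le_total[OF comparable] L that by blast
  qed
  moreover have "\<forall>x\<in>T. \<forall>y\<in>T. R x y \<longrightarrow> L x y"
    using prefix_below_imp_list_lex_le R L by blast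
  moreover have "upsets_ordered T R L"
    unfolding upsets_ordered_def
  proof (intro ballI impI)
    fix x' x y' y assume "x' \<in> T" "x \<in> T" "y' \<in> T" "y \<in> T"
      and "R x' x \<and> R y' y \<and> \<not> R x' y' \<and> \<not> R y' x' \<and> L x' y'"
    then show "L x y"
      using list_lex_le_above_incomparable[OF r, of "f y" "f x'" "f y'" "f x"] lists R L by blast
  qed
  ultimately show "ordered_forest T R L" using ordered_forestI[OF forest] by blast
qed

section \<open>The forest \<open>S \<otimes> I\<close>\<close>

lemma porder_on_sum_le:
  assumes "porder_on S lo" "porder_on I leI"
  shows "porder_on (Inl ` S \<union> Inr ` I) (sum_le lo leI)"
proof -
  have lo: "\<forall>x\<in>S. lo x x" "\<forall>x\<in>S. \<forall>y\<in>S. lo x y \<and> lo y x \<longrightarrow> x = y"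
      "\<forall>x\<in>S. \<forall>y\<in>S. \<forall>z\<in>S. lo x y \<and> lo y z \<longrightarrow> lo x z"
    and leI: "\<forall>x\<in>I. leI x x" "\<forall>x\<in>I. \<forall>y\<in>I. leI x y \<and> leI y x \<longrightarrow> x = y"
      "\<forall>x\<in>I. \<forall>y\<in>I. \<forall>z\<in>I. leI x y \<and> leI y z \<longrightarrow> leI x z"
    using assms unfolding porder_on_def by blast+
  show ?thesis
    unfolding porder_on_def
  proof (intro conjI ballI impI)
    fix x y z assume "x \<in> Inl ` S \<union> Inr ` I" "y \<in> Inl ` S \<union> Inr ` I" "z \<in> Inl ` S \<union> Inr ` I"
    then show "sum_le lo leI x x"
      and "sum_le lo leI x y \<and> sum_le lo leI y x \<Longrightarrow> x = y"
      and "sum_le lo leI x y \<and> sum_le lo leI y z \<Longrightarrow> sum_le lo leI x z"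
      by (cases x; cases y; cases z; simp add: sum_le_def image_iff; use lo leI in blast)+
  qed
qed

lemma take_eq_take_iff:
  "k \<le> length xs \<Longrightarrow> k \<le> length ys \<Longrightarrow> take k xs = take k ys \<longleftrightarrow> (\<forall>i<k. xs!i = ys!i)"
  by (auto simp: list_eq_iff_nth_eq)

lemma concat_map_pairs:
  "concat (map (\<lambda>i. [f i, g i]) [0..<n]) = map (\<lambda>j. if even j then f (j div 2) else g (j div 2)) [0..<2*n]"
  by (induction n) auto

lemma all_less_double_minus_one_iff:
  fixes n :: nat
  shows "(\<forall>j<2*n - 1. P j) \<longleftrightarrow> (\<forall>i<n. P (2*i)) \<and> (\<forall>i<n - 1. P (2*i+1))"
proof (intro iffI conjI allI impI)
  fix j assume all: "(\<forall>i<n. P (2*i)) \<and> (\<forall>i<n - 1. P (2*i+1))" and j: "j < 2*n - 1"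
  show "P j"
  proof (cases "even j")
    case True
    then show ?thesis using all j by (auto elim!: evenE)
  next
    case False
    then show ?thesis using all j by (auto elim!: oddE)
  qed
qed auto

context forest_on
begin

lemma length_interleave [simp]: "length (interleave S le (s, t)) = 2 * ht S le s"
  by (simp add: interleave_def concat_map_pairs)

lemma interleave_nonempty: "s \<in> S \<Longrightarrow> interleave S le (s, t) \<noteq> []"
  using ht_pos length_interleave[of s t] by (metis length_0_conv mult_is_0 neq0_conv zero_neq_numeral)

lemma nth_interleave:
  "j < 2 * ht S le s \<Longrightarrow>
    interleave S le (s, t) ! j = (if even j then Inl (pred_at S le s (j div 2)) else Inr (t ! (j div 2)))"
  by (simp add: interleave_def concat_map_pairs)

lemma nth_interleave_even:
  "i < ht S le s \<Longrightarrow> interleave S le (s, t) ! (2*i) = Inl (pred_at S le s i)"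
  by (simp add: interleave_def concat_map_pairs)

lemma nth_interleave_odd:
  "i < ht S le s \<Longrightarrow> interleave S le (s, t) ! (2*i+1) = Inr (t ! i)"
  by (simp add: interleave_def concat_map_pairs)

lemma nth_interleave_last:
  "s \<in> S \<Longrightarrow> interleave S le (s, t) ! (2 * ht S le s - 1) = Inr (t ! (ht S le s - 1))"
proof -
  assume "s \<in> S"
  then have "2 * ht S le s - 1 = 2 * (ht S le s - 1) + 1" "ht S le s - 1 < ht S le s"
    using ht_pos[of s] by auto
  then show ?thesis using nth_interleave_odd[of "ht S le s - 1" s t] by simp
qed

lemma interleave_prefix_eq_iff:
  assumes "ht S le s \<le> ht S le s'"
  shows "(\<forall>j<2 * ht S le s - 1. interleave S le (s, t) ! j = interleave S le (s', t') ! j) \<longleftrightarrow>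
    (\<forall>i<ht S le s. pred_at S le s i = pred_at S le s' i) \<and> (\<forall>i<ht S le s - 1. t!i = t'!i)"
proof -
  have "interleave S le (s, t) ! (2*i) = interleave S le (s', t') ! (2*i) \<longleftrightarrow>
      pred_at S le s i = pred_at S le s' i" if "i < ht S le s" for i
    using nth_interleave_even[OF that] nth_interleave_even[OF order_less_le_trans[OF that assms]]
    by (metis sum.inject(1))
  moreover have "interleave S le (s, t) ! (2*i+1) = interleave S le (s', t') ! (2*i+1) \<longleftrightarrow>
      t!i = t'!i" if "i < ht S le s - 1" for i
  proof -
    have "i < ht S le s" "i < ht S le s'" using that assms by linarith+
    then show ?thesis using nth_interleave_odd[of i] by (metis sum.inject(2))
  qed
  ultimately show ?thesis unfolding all_less_double_minus_one_iff by auto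
qed

lemma mem_tensor:
  "(s, t) \<in> tensor S le I \<longleftrightarrow> s \<in> S \<and> set t \<subseteq> I \<and> length t \<le> forest_ht S le \<and> length t = ht S le s"
  by (simp add: tensor_def)

lemma finite_tensor: "finite I \<Longrightarrow> finite (tensor S le I)"
  by (rule finite_subset[of _ "S \<times> {t. set t \<subseteq> I \<and> length t \<le> forest_ht S le}"])
    (auto simp: tensor_def finite_carrier finite_lists_length_le)

lemma tensor_le_iff_prefix_below:
  assumes p: "(s, t) \<in> tensor S le I" and q: "(s', t') \<in> tensor S le I"
  shows "tensor_le S le leI (s, t) (s', t') \<longleftrightarrow>
    prefix_below (sum_le lo leI) (interleave S le (s, t)) (interleave S le (s', t'))"
proof -
  let ?h = "ht S le s" and ?h' = "ht S le s'"
  have s: "s \<in> S" "length t = ?h" and s': "s' \<in> S" "length t' = ?h'"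
    using p q by (auto simp: mem_tensor)
  have "tensor_le S le leI (s, t) (s', t') \<longleftrightarrow>
      ?h \<le> ?h' \<and> (\<forall>i<?h. pred_at S le s i = pred_at S le s' i) \<and>
      take (?h - 1) t = take (?h - 1) t' \<and> leI (t ! (?h - 1)) (t' ! (?h - 1))"
    by (simp add: tensor_le_def le_iff_pred_at[OF s(1) s'(1)])
  also have "\<dots> \<longleftrightarrow> ?h \<le> ?h' \<and> (\<forall>i<?h. pred_at S le s i = pred_at S le s' i) \<and>
      (\<forall>i<?h - 1. t!i = t'!i) \<and> leI (t ! (?h - 1)) (t' ! (?h - 1))"
    using s s' take_eq_take_iff[of "?h - 1" t t'] by auto
  also have "\<dots> \<longleftrightarrow> prefix_below (sum_le lo leI) (interleave S le (s, t)) (interleave S le (s', t'))"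
  proof (cases "?h \<le> ?h'")
    case True
    have "2 * ?h - 1 = 2 * (?h - 1) + 1" "?h - 1 < ?h'" using ht_pos[OF s(1)] True by auto
    then have "interleave S le (s', t') ! (2 * ?h - 1) = Inr (t' ! (?h - 1))"
      using nth_interleave_odd[of "?h - 1" s' t'] by simp
    moreover have "prefix_below (sum_le lo leI) (interleave S le (s, t)) (interleave S le (s', t')) \<longleftrightarrow>
        (\<forall>j<2 * ?h - 1. interleave S le (s, t) ! j = interleave S le (s', t') ! j) \<and>
        sum_le lo leI (interleave S le (s, t) ! (2 * ?h - 1)) (interleave S le (s', t') ! (2 * ?h - 1))"
      using True ht_pos[OF s(1)] by (simp add: prefix_below_def interleave_nonempty[OF s(1)])
    ultimately show ?thesis
      unfolding interleave_prefix_eq_iff[OF True] nth_interleave_last[OF s(1)]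
      using True by (simp add: sum_le_def)
  qed (auto simp: prefix_below_def)
  finally show ?thesis .
qed

lemma set_interleave_subset:
  assumes "(s, t) \<in> tensor S le I"
  shows "set (interleave S le (s, t)) \<subseteq> Inl ` S \<union> Inr ` I"
proof
  fix x assume "x \<in> set (interleave S le (s, t))"
  then obtain j where j: "j < 2 * ht S le s" "x = interleave S le (s, t) ! j"
    by (auto simp: in_set_conv_nth)
  moreover have "j div 2 < ht S le s" "s \<in> S" "length t = ht S le s" "set t \<subseteq> I"
    using j assms by (auto simp: mem_tensor)
  ultimately show "x \<in> Inl ` S \<union> Inr ` I"
    using pred_at(1) nth_in_subset[of t I "j div 2"] by (cases "even j") (auto simp: nth_interleave)
qed

lemma interleave_componentwise_comparable:
  assumes "lorder_on S lo" "lorder_on I leI"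
    and p: "(s, t) \<in> tensor S le I" and q: "(s', t') \<in> tensor S le I"
  shows "componentwise_comparable (sum_le lo leI) (interleave S le (s, t)) (interleave S le (s', t'))"
  unfolding componentwise_comparable_def
proof (intro allI impI)
  fix j assume "j < length (interleave S le (s, t))" "j < length (interleave S le (s', t'))"
  then have j: "j < 2 * ht S le s" "j < 2 * ht S le s'" by simp_all
  have "interleave S le (s, t) ! j \<in> Inl ` S \<union> Inr ` I"
    "interleave S le (s', t') ! j \<in> Inl ` S \<union> Inr ` I"
    using nth_in_subset[OF set_interleave_subset[OF p]] nth_in_subset[OF set_interleave_subset[OF q]] j
    by simp_all
  then show "sum_le lo leI (interleave S le (s, t) ! j) (interleave S le (s', t') ! j) \<or>
      sum_le lo leI (interleave S le (s', t') ! j) (interleave S le (s, t) ! j)"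
    using assms(1,2) j unfolding lorder_on_def by (cases "even j") (auto simp: nth_interleave sum_le_def)
qed

lemma inj_on_interleave: "inj_on (interleave S le) (tensor S le I)"
proof (rule inj_onI, clarify)
  fix s t s' t' assume p: "(s, t) \<in> tensor S le I" and q: "(s', t') \<in> tensor S le I"
    and eq: "interleave S le (s, t) = interleave S le (s', t')"
  let ?h = "ht S le s"
  have s: "s \<in> S" "length t = ?h" and s': "s' \<in> S" "length t' = ht S le s'"
    using p q by (auto simp: mem_tensor)
  have h: "ht S le s' = ?h" using arg_cong[OF eq, of length] by simp
  then have pred: "\<forall>i<?h. pred_at S le s i = pred_at S le s' i"
    and init: "\<forall>i<?h - 1. t!i = t'!i"
    using interleave_prefix_eq_iff[of s s' t t'] eq by simp_all
  have last: "?h - 1 < ?h" using ht_pos[OF s(1)] by simp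
  have "s = pred_at S le s (?h - 1)" using pred_at_last[OF s(1)] by simp
  also have "\<dots> = pred_at S le s' (?h - 1)" using pred last by blast
  also have "\<dots> = s'" using pred_at_last[OF s'(1)] h by simp
  finally have "s = s'" .
  moreover have "t = t'"
  proof (rule nth_equalityI)
    show "length t = length t'" using s s' h by simp
    have "Inr (t!(?h - 1)) = Inr (t'!(?h - 1))"
      using nth_interleave_last[OF s(1), of t] nth_interleave_last[OF s'(1), of t']
      unfolding eq h by simp
    then show "t!i = t'!i" if "i < length t" for i
      using init that s(2) by (cases "i = ?h - 1") auto
  qed
  ultimately show "s = s' \<and> t = t'" ..
qed

end

theorem lemma4p11:
  fixes S :: "'a set" and le lo :: "'a \<Rightarrow> 'a \<Rightarrow> bool"
    and I :: "'i set" and leI :: "'i \<Rightarrow> 'i \<Rightarrow> bool"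
  assumes "ordered_forest S le lo"
    and "finite I" and "lorder_on I leI"
  shows "forest (tensor S le I) (tensor_le S le leI) \<and>
         ordered_forest (tensor S le I) (tensor_le S le leI) (tensor_lo S le lo leI)"
proof -
  have forest: "forest S le" and lo_linear: "lorder_on S lo"
    using assms(1) unfolding ordered_forest_def by blast+
  interpret forest_on S le using forest by unfold_locales
  let ?T = "tensor S le I" and ?r = "sum_le lo leI" and ?f = "interleave S le"
  have r: "porder_on (Inl ` S \<union> Inr ` I) ?r"
    using porder_on_sum_le lo_linear assms(3) unfolding lorder_on_def by blast
  have lists: "?f p \<noteq> [] \<and> set (?f p) \<subseteq> Inl ` S \<union> Inr ` I" if "p \<in> ?T" for p
    using that by (cases p) (metis interleave_nonempty mem_tensor set_interleave_subset)
  have comparable: "componentwise_comparable ?r (?f p) (?f q)" if "p \<in> ?T" "q \<in> ?T" for p q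
    using that interleave_componentwise_comparable[OF lo_linear assms(3)] by (cases p, cases q) simp
  have le: "tensor_le S le leI p q \<longleftrightarrow> prefix_below ?r (?f p) (?f q)" if "p \<in> ?T" "q \<in> ?T" for p q
    using that tensor_le_iff_prefix_below by (cases p, cases q) simp
  have lex: "tensor_lo S le lo leI p q \<longleftrightarrow> list_lex_le ?r (?f p) (?f q)" for p q
    by (simp add: tensor_lo_def)
  note via_lists = ordered_forest_via_lists[OF finite_tensor[OF assms(2)] r inj_on_interleave lists comparable le lex]
  show ?thesis using via_lists by blast
qed

end
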